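(* Let $\mathbb G=V_1\times V_2$ be a step-two Carnot group and let $f\in\mathcal A_h(\mathbb G)$. Assume in addition that $f$ is $V_2$-affine, i.e. for every $(x,z)\in\mathbb G$ and $z'\in V_2$ the map $t\in\mathbb R\mapsto f(x,z+tz')$ is affine. Then there are an affine map $a\in\mathcal A(V_1\times V_2)$ and a bilinear map $b:V_1\times V_2\to\mathbb R$ such that $b(x,[x,x'])=0$ for all $x,x'\in V_1$ and $f(x,z)=a(x,z)+b(x,z)$ for all $(x,z)\in\mathbb G$.
   Context: A step-two Carnot group is $\mathbb G=V_1\times V_2$, where $V_1,V_2$ are finite-dimensional real vector spaces with $V_2\neq\{0\}$, equipped with a bilinear skew-symmetric map $[\cdot,\cdot]:V_1\times V_1\to V_2$ with $\operatorname{span}\{[x,x']:x,x'\in V_1\}=V_2$, and group law $(x,z)\cdot(x',z')=(x+x',z+z'+[x,x'])$. $\mathcal A_h(\mathbb G)$ is the space of $h$-affine maps $f:\mathbb G\to\mathbb R$, i.e. such that for all $(x,z)\in\mathbb G$, $y\in V_1$, $t\mapsto f((x,z)\cdot(ty,0))$ is affine. $\mathcal A(V_1\times V_2)$ denotes the maps affine in the usual sense on the vector space $V_1\times V_2$. *)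

theory Defs
  imports "HOL-Analysis.Analysis"
begin

text \<open>V1, V2 are finite-dimensional real vector spaces (euclidean_space types;
  such types are never the zero space, so V2 \<noteq> {0} holds automatically).\<close>
definition step2_carnot :: "('a::euclidean_space \<Rightarrow> 'a \<Rightarrow> 'b::euclidean_space) \<Rightarrow> bool" where
  "step2_carnot br \<longleftrightarrow> bilinear br \<and> (\<forall>x y. br x y = - br y x)
     \<and> span {br x y | x y. True} = UNIV"

definition carnot_mult :: "('a::euclidean_space \<Rightarrow> 'a \<Rightarrow> 'b::euclidean_space)
   \<Rightarrow> 'a \<times> 'b \<Rightarrow> 'a \<times> 'b \<Rightarrow> 'a \<times> 'b" where
  "carnot_mult br p q = (fst p + fst q, snd p + snd q + br (fst p) (fst q))"

definition affine_fun_real :: "(real \<Rightarrow> real) \<Rightarrow> bool" where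
  "affine_fun_real g \<longleftrightarrow> (\<exists>\<alpha> \<beta>. \<forall>t. g t = \<alpha> * t + \<beta>)"

definition affine_map :: "('v::real_vector \<Rightarrow> real) \<Rightarrow> bool" where
  "affine_map a \<longleftrightarrow> (\<exists>l c. linear l \<and> (\<forall>p. a p = l p + c))"

definition h_affine :: "('a::euclidean_space \<Rightarrow> 'a \<Rightarrow> 'b::euclidean_space)
   \<Rightarrow> ('a \<times> 'b \<Rightarrow> real) \<Rightarrow> bool" where
  "h_affine br f \<longleftrightarrow> (\<forall>p y. affine_fun_real (\<lambda>t. f (carnot_mult br p (t *\<^sub>R y, 0))))"

definition V2_affine :: "('a::euclidean_space \<times> 'b::euclidean_space \<Rightarrow> real) \<Rightarrow> bool" where
  "V2_affine f \<longleftrightarrow> (\<forall>x z z'. affine_fun_real (\<lambda>t. f (x, z + t *\<^sub>R z')))"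

end

theory Submission
  imports Defs
begin

text \<open>Along the fibres \<open>{x} \<times> V\<^sub>2\<close> the function is affine, and along horizontal lines the
  fibrewise linear parts vary affinely; this gives \<open>f(x,z) = c(x) + B(x,z) + \<mu>(z)\<close> with
  \<open>B\<close> bilinear and \<open>\<mu>\<close> linear. Restricted to the horizontal line \<open>t \<mapsto> (p,0)\<cdot>(ty,0)\<close>,
  h-affinity then says that \<open>c(p + ty) + t\<^sup>2 B(y,[p,y])\<close> is affine in \<open>t\<close>. For \<open>p = 0\<close> this
  makes \<open>c\<close> affine on lines through the origin, so \<open>c(2x) - c(0) = 2(c(x) - c(0))\<close>; the
  correction term, however, is homogeneous of degree three in \<open>(p,y)\<close>. Comparing the lines
  through \<open>p\<close> and \<open>2p\<close> therefore forces \<open>B(y,[p,y]) = 0\<close>, after which \<open>c\<close> is affine.\<close>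

lemma affine_fun_real_iff: "affine_fun_real g \<longleftrightarrow> (\<forall>t. g t = g 0 + t * (g 1 - g 0))"
proof
  assume "affine_fun_real g"
  then obtain \<alpha> \<beta> where "\<And>t. g t = \<alpha> * t + \<beta>"
    unfolding affine_fun_real_def by blast
  then show "\<forall>t. g t = g 0 + t * (g 1 - g 0)"
    by (simp add: algebra_simps)
next
  assume "\<forall>t. g t = g 0 + t * (g 1 - g 0)"
  then show "affine_fun_real g"
    unfolding affine_fun_real_def by (metis add.commute mult.commute)
qed

lemma affine_fun_real_diff:
  assumes "affine_fun_real g" "affine_fun_real h"
  shows "affine_fun_real (\<lambda>t. g t - h t)"
proof -
  obtain \<alpha> \<beta> \<alpha>' \<beta>' where "\<And>t. g t = \<alpha> * t + \<beta>" "\<And>t. h t = \<alpha>' * t + \<beta>'"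
    using assms unfolding affine_fun_real_def by metis
  then have "\<And>t. g t - h t = (\<alpha> - \<alpha>') * t + (\<beta> - \<beta>')"
    by (simp add: algebra_simps)
  then show ?thesis
    unfolding affine_fun_real_def by blast
qed

lemma affine_fun_real_linear: "affine_fun_real (\<lambda>t. k * t)"
  unfolding affine_fun_real_def by (metis add_0_right)

lemma affine_fun_real_scale:
  assumes "affine_fun_real g"
  shows "affine_fun_real (\<lambda>t. k * g t)"
  using assms unfolding affine_fun_real_def by (metis distrib_left mult.assoc)

lemma affine_fun_real_quadratic_imp_zero:
  assumes "affine_fun_real (\<lambda>t. a * t\<^sup>2 + b * t + c)"
  shows "a = 0"
  using assms[unfolded affine_fun_real_iff, rule_format, of "-1"] by simp

lemma affine_on_lines_imp_linear:
  fixes g :: "'v::real_vector \<Rightarrow> real"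
  assumes lines: "\<And>p u. affine_fun_real (\<lambda>t. g (p + t *\<^sub>R u))"
  shows "linear (\<lambda>z. g z - g 0)"
proof -
  have ray: "g (t *\<^sub>R u) = g 0 + t * (g u - g 0)" for t u
    using lines[of 0 u] by (simp add: affine_fun_real_iff)
  show ?thesis
  proof (rule linearI)
    fix z w :: 'v
    have "g (2 *\<^sub>R z + (1/2) *\<^sub>R (2 *\<^sub>R w - 2 *\<^sub>R z))
        = g (2 *\<^sub>R z) + (1/2) * (g (2 *\<^sub>R w) - g (2 *\<^sub>R z))"
      using lines[of "2 *\<^sub>R z" "2 *\<^sub>R w - 2 *\<^sub>R z"] by (simp add: affine_fun_real_iff)
    moreover have "2 *\<^sub>R z + (1/2) *\<^sub>R (2 *\<^sub>R w - 2 *\<^sub>R z) = z + w"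
      by (simp add: scaleR_diff_right) (simp add: scaleR_2 algebra_simps)
    ultimately show "g (z + w) - g 0 = (g z - g 0) + (g w - g 0)"
      by (simp add: ray field_simps)
  qed (simp add: ray)
qed

lemma carnot_mult_horizontal:
  assumes "bilinear br"
  shows "carnot_mult br (x, z) (t *\<^sub>R y, 0) = (x + t *\<^sub>R y, z + t *\<^sub>R br x y)"
  by (simp add: carnot_mult_def bilinear_rmul[OF assms])

lemma h_affine_along_horizontal_line:
  assumes "h_affine br f" "bilinear br"
  shows "affine_fun_real (\<lambda>t. f (x + t *\<^sub>R y, z + t *\<^sub>R br x y))"
  using assms(1) unfolding h_affine_def
  by (simp only: carnot_mult_horizontal[OF assms(2), symmetric])

lemma V2_affine_fibre_linear:
  assumes "V2_affine f"
  shows "linear (\<lambda>z. f (x, z) - f (x, 0))"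
  using affine_on_lines_imp_linear[of "\<lambda>z. f (x, z)"] assms by (simp add: V2_affine_def)

lemma h_affine_V2_affine_decomposition:
  assumes "bilinear br" "h_affine br f" "V2_affine f"
  obtains c B \<mu> where "bilinear B" "linear \<mu>" "\<And>x z. f (x, z) = c x + B x z + \<mu> z"
proof -
  define l where "l x z = f (x, z) - f (x, 0)" for x z
  have l_linear: "linear (l x)" for x
    using V2_affine_fibre_linear[OF assms(3)] by (simp add: l_def[abs_def])
  have "f (p, z + v) - f (p, 0 + v) = l p z" for p v z
    using linear_add[OF l_linear[of p], of z v] unfolding l_def by simp
  then have "affine_fun_real (\<lambda>t. l (x + t *\<^sub>R y) z)" for x y z
    using affine_fun_real_diff[OF h_affine_along_horizontal_line[OF assms(2,1)]
        h_affine_along_horizontal_line[OF assms(2,1)], of x y z x y 0]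
    by simp
  then have "linear (\<lambda>x. l x z - l 0 z)" for z
    by (intro affine_on_lines_imp_linear)
  moreover have "linear (\<lambda>z. l x z - l 0 z)" for x
    using linear_compose_sub[OF l_linear l_linear] by simp
  ultimately have "bilinear (\<lambda>x z. l x z - l 0 z)"
    unfolding bilinear_def by simp
  moreover have "f (x, z) = f (x, 0) + (l x z - l 0 z) + l 0 z" for x z
    by (simp add: l_def)
  ultimately show ?thesis
    using that[of "\<lambda>x z. l x z - l 0 z" "l 0" "\<lambda>x. f (x, 0)"] l_linear by blast
qed

lemma h_affine_decomposition_along_horizontal_line:
  assumes "bilinear br" "h_affine br f" "bilinear B" "linear \<mu>"
    and f: "\<And>x z. f (x, z) = c x + B x z + \<mu> z"
  shows "affine_fun_real (\<lambda>t. c (p + t *\<^sub>R y) + B y (br p y) * t\<^sup>2)"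
proof -
  have "f (p + t *\<^sub>R y, 0 + t *\<^sub>R br p y)
      = c (p + t *\<^sub>R y) + B y (br p y) * t\<^sup>2 + (B p (br p y) + \<mu> (br p y)) * t" for t
    by (simp add: f bilinear_ladd[OF assms(3)] bilinear_lmul[OF assms(3)] bilinear_rmul[OF assms(3)]
        linear_scale[OF assms(4)] power2_eq_square algebra_simps)
  then show ?thesis
    using affine_fun_real_diff[OF h_affine_along_horizontal_line[OF assms(2,1)]
        affine_fun_real_linear, of p y 0 "B p (br p y) + \<mu> (br p y)"]
    by simp
qed

lemma horizontal_cubic_term_vanishes:
  fixes c :: "'a::real_vector \<Rightarrow> real"
  assumes "bilinear br" "bilinear B"
    and lines: "\<And>p y. affine_fun_real (\<lambda>t. c (p + t *\<^sub>R y) + B y (br p y) * t\<^sup>2)"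
  shows "B y (br p y) = 0"
proof -
  have ray: "c (s *\<^sub>R x) = c 0 + s * (c x - c 0)" for s x
    using lines[of 0 x]
    by (simp add: affine_fun_real_iff bilinear_lzero[OF assms(1)] bilinear_rzero[OF assms(2)])
  have cubic: "B (2 *\<^sub>R y) (br (2 *\<^sub>R p) (2 *\<^sub>R y)) = 8 * B y (br p y)"
    by (simp add: bilinear_lmul[OF assms(1)] bilinear_rmul[OF assms(1)]
        bilinear_lmul[OF assms(2)] bilinear_rmul[OF assms(2)])
  have "(\<lambda>t. c (2 *\<^sub>R p + t *\<^sub>R 2 *\<^sub>R y) + B (2 *\<^sub>R y) (br (2 *\<^sub>R p) (2 *\<^sub>R y)) * t\<^sup>2
          - 2 * (c (p + t *\<^sub>R y) + B y (br p y) * t\<^sup>2))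
      = (\<lambda>t. 6 * B y (br p y) * t\<^sup>2 + 0 * t + - c 0)"
  proof
    fix t
    have "c (2 *\<^sub>R p + t *\<^sub>R 2 *\<^sub>R y) = 2 * c (p + t *\<^sub>R y) - c 0"
      using ray[of 2 "p + t *\<^sub>R y"] by (simp add: scaleR_add_right mult.commute)
    then show "c (2 *\<^sub>R p + t *\<^sub>R 2 *\<^sub>R y) + B (2 *\<^sub>R y) (br (2 *\<^sub>R p) (2 *\<^sub>R y)) * t\<^sup>2
        - 2 * (c (p + t *\<^sub>R y) + B y (br p y) * t\<^sup>2) = 6 * B y (br p y) * t\<^sup>2 + 0 * t + - c 0"
      by (simp add: cubic algebra_simps)
  qed
  then have "affine_fun_real (\<lambda>t. 6 * B y (br p y) * t\<^sup>2 + 0 * t + - c 0)"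
    using affine_fun_real_diff[OF lines affine_fun_real_scale[OF lines], of "2 *\<^sub>R p" "2 *\<^sub>R y" 2 p y]
    by simp
  then have "6 * B y (br p y) = 0"
    by (rule affine_fun_real_quadratic_imp_zero)
  then show ?thesis
    by simp
qed

theorem proposition3p4:
  fixes br :: "'a::euclidean_space \<Rightarrow> 'a \<Rightarrow> 'b::euclidean_space"
    and f :: "'a \<times> 'b \<Rightarrow> real"
  assumes "step2_carnot br"
    and "h_affine br f"
    and "V2_affine f"
  shows "\<exists>a b. affine_map a \<and> bilinear b
           \<and> (\<forall>x x'. b x (br x x') = 0)
           \<and> (\<forall>x z. f (x, z) = a (x, z) + b x z)"
proof -
  have br: "bilinear br" and skew: "\<And>x y. br x y = - br y x"
    using assms(1) unfolding step2_carnot_def by blast+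
  obtain c B \<mu> where B: "bilinear B" and \<mu>: "linear \<mu>"
    and f: "\<And>x z. f (x, z) = c x + B x z + \<mu> z"
    using h_affine_V2_affine_decomposition[OF br assms(2,3)] by metis
  have lines: "affine_fun_real (\<lambda>t. c (p + t *\<^sub>R y) + B y (br p y) * t\<^sup>2)" for p y
    using h_affine_decomposition_along_horizontal_line[OF br assms(2) B \<mu> f] .
  have cubic_zero: "B y (br p y) = 0" for p y
    using horizontal_cubic_term_vanishes[OF br B lines] .
  have "linear (\<lambda>x. c x - c 0)"
    using lines by (intro affine_on_lines_imp_linear) (simp add: cubic_zero)
  then have "linear (\<lambda>q. (c (fst q) - c 0) + \<mu> (snd q))"
    using \<mu> by (auto simp: linear_iff algebra_simps)
  then have "affine_map (\<lambda>q. c (fst q) + \<mu> (snd q))"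
    unfolding affine_map_def by (intro exI[of _ "c 0"] exI conjI allI) auto
  moreover have "B x (br x x') = 0" for x x'
    using cubic_zero[of x x'] by (simp add: skew[of x x'] bilinear_rneg[OF B])
  ultimately show ?thesis
    using B f by (intro exI[of _ "\<lambda>q. c (fst q) + \<mu> (snd q)"] exI[of _ B]) auto
qed

end
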